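(* Let $n\ge1$, $q\in\mathbb{C}$ with $0<|q|<1$, and $0<r<\frac{1-|q|}{|1-q|}$. For every $\sigma\in\mathbb{S}_n$, $$\Big(\frac{1}{2\pi i}\Big)^n\oint_{\mathcal{C}_r}\cdots\oint_{\mathcal{C}_r}A_\sigma\prod_{i=1}^n z_i^{-1}\,dz_1\cdots dz_n=q^{\mathrm{inv}(\sigma)},$$ where $\mathrm{inv}(\sigma)$ is the number of inversions of $\sigma$.
   Context: $\mathcal{C}_r$ is the positively oriented circle of radius $r$ centered at $0$. For $1\le\alpha<\beta\le n$ put $S_{\beta\alpha}=-\dfrac{z_\beta-qz_\alpha-(1-q)z_\alpha z_\beta}{z_\alpha-qz_\beta-(1-q)z_\alpha z_\beta}$. An inversion of $\sigma\in\mathbb{S}_n$ is a pair $(\alpha,\beta)$ with $1\le\alpha<\beta\le n$ and $\sigma^{-1}(\beta)<\sigma^{-1}(\alpha)$. $A_\sigma=\prod_{(\alpha,\beta)\text{ inversion of }\sigma}S_{\beta\alpha}$. *)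

theory Defs
  imports "HOL-Analysis.Analysis" "HOL-Combinatorics.Permutations"
begin

definition circle_integral :: "real \<Rightarrow> (complex \<Rightarrow> complex) \<Rightarrow> complex" where
  "circle_integral r f =
     integral {0..1} (\<lambda>t::real. f (of_real r * exp (2 * of_real pi * \<i> * of_real t))
                         * (2 * of_real pi * \<i> * of_real r * exp (2 * of_real pi * \<i> * of_real t)))"

text \<open>Iterated contour integral over C_r in the variables z_1, ..., z_k
  (z_1 innermost, z_k outermost); variables are stored in a function nat => complex.\<close>
fun iter_circle_integral :: "real \<Rightarrow> nat \<Rightarrow> ((nat \<Rightarrow> complex) \<Rightarrow> complex) \<Rightarrow> complex" where
  "iter_circle_integral r 0 F = F (\<lambda>_. 0)"
| "iter_circle_integral r (Suc k) F =
     circle_integral r (\<lambda>w. iter_circle_integral r k (\<lambda>z. F (z(Suc k := w))))"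

definition S_fac :: "complex \<Rightarrow> (nat \<Rightarrow> complex) \<Rightarrow> nat \<Rightarrow> nat \<Rightarrow> complex" where
  "S_fac q z \<beta> \<alpha> =
     - ((z \<beta> - q * z \<alpha> - (1 - q) * z \<alpha> * z \<beta>) / (z \<alpha> - q * z \<beta> - (1 - q) * z \<alpha> * z \<beta>))"

definition inversions :: "nat \<Rightarrow> (nat \<Rightarrow> nat) \<Rightarrow> (nat \<times> nat) set" where
  "inversions n \<sigma> = {(\<alpha>, \<beta>). 1 \<le> \<alpha> \<and> \<alpha> < \<beta> \<and> \<beta> \<le> n \<and> inv \<sigma> \<beta> < inv \<sigma> \<alpha>}"

definition A_perm :: "complex \<Rightarrow> nat \<Rightarrow> (nat \<Rightarrow> nat) \<Rightarrow> (nat \<Rightarrow> complex) \<Rightarrow> complex" where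
  "A_perm q n \<sigma> z = (\<Prod>(\<alpha>, \<beta>)\<in>inversions n \<sigma>. S_fac q z \<beta> \<alpha>)"

end

theory Submission
  imports Defs "HOL-Complex_Analysis.Cauchy_Integral_Formula"
begin

text \<open>Each circle integral is 2 pi i times the mean over the circle of the integrand
  multiplied by the variable, so the claim says that the iterated mean of A_sigma over the
  torus |z_i| = r is q^inv(sigma). The last variable z_n occurs only in the factors
  S_{n alpha}; when |z_alpha| = r, each of them is holomorphic in z_n on the disc of radius
  r / (|q| + |1 - q| r) > r and equals q at z_n = 0. Moving the z_n-mean innermost (Fubini,
  the integrand being continuous on the torus) and applying the mean value property thus
  contributes one factor q per inversion (alpha, n), and induction on n concludes.\<close>

lemma norm_circlepath_0 [simp]: "0 \<le> r \<Longrightarrow> norm (circlepath 0 r t) = r"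
  by (simp add: circlepath norm_mult)

lemma circlepath_0_nonzero [simp]: "r \<noteq> 0 \<Longrightarrow> circlepath 0 r t \<noteq> 0"
  by (simp add: circlepath)

lemma circle_integral_eq_integral_circlepath:
  "circle_integral r f = 2 * of_real pi * \<i> * integral {0..1} (\<lambda>t. circlepath 0 r t * f (circlepath 0 r t))"
  unfolding circle_integral_def circlepath by (simp add: mult_ac)

lemma circle_mean_value:
  assumes holo: "f holomorphic_on ball 0 R" and r: "0 < r" "r < R"
  shows "integral {0..1} (\<lambda>t. f (circlepath 0 r t)) = f 0"
proof -
  have "f holomorphic_on cball 0 r"
    by (rule holomorphic_on_subset[OF holo]) (use r in auto)
  then have "((\<lambda>w. f w / w) has_contour_integral (2 * of_real pi * \<i> * f 0)) (circlepath 0 r)"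
    using Cauchy_integral_circlepath_simple[of f 0 r 0] r by simp
  then have "contour_integral (circlepath 0 r) (\<lambda>w. f w / w) = 2 * of_real pi * \<i> * f 0"
    by (rule contour_integral_unique)
  moreover have "contour_integral (circlepath 0 r) (\<lambda>w. f w / w)
      = 2 * of_real pi * \<i> * integral {0..1} (\<lambda>t. f (circlepath 0 r t))"
    using r unfolding contour_integral_integral vector_derivative_circlepath
    by (simp add: circlepath mult_ac)
  ultimately show ?thesis by simp
qed

fun iter_circle_mean ::
  "real \<Rightarrow> nat \<Rightarrow> ((nat \<Rightarrow> complex) \<Rightarrow> complex) \<Rightarrow> (nat \<Rightarrow> complex) \<Rightarrow> complex" where
  "iter_circle_mean r 0 F b = F b"
| "iter_circle_mean r (Suc k) F b =
     integral {0..1} (\<lambda>t. iter_circle_mean r k F (b(Suc k := circlepath 0 r t)))"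

lemma iter_circle_mean_mult: "iter_circle_mean r k (\<lambda>z. c * F z) b = c * iter_circle_mean r k F b"
  by (induction k arbitrary: b) simp_all

lemma iter_circle_mean_fun_upd:
  assumes "j \<notin> {1..k}"
  shows "iter_circle_mean r k (\<lambda>z. F (z(j := w))) b = iter_circle_mean r k F (b(j := w))"
  using assms
proof (induction k arbitrary: b)
  case (Suc k)
  then have "j \<notin> {1..k}" and twist: "\<And>c. b(Suc k := c, j := w) = b(j := w, Suc k := c)"
    by (auto intro: fun_upd_twist)
  show ?case
    unfolding iter_circle_mean.simps Suc.IH[OF \<open>j \<notin> {1..k}\<close>] twist ..
qed simp

lemma prod_inverse_fun_upd_Suc:
  "(\<Prod>i=1..Suc k. inverse ((z(Suc k := w)) i)) = inverse w * (\<Prod>i=1..k. inverse (z i :: complex))"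
proof -
  have "(\<Prod>i=1..k. inverse ((z(Suc k := w)) i)) = (\<Prod>i=1..k. inverse (z i))"
    by (intro prod.cong) auto
  then show ?thesis by (simp add: prod.cl_ivl_Suc mult.commute)
qed

lemma iter_circle_integral_eq_mean:
  assumes "r \<noteq> 0"
  shows "iter_circle_integral r k (\<lambda>z. F z * (\<Prod>i=1..k. inverse (z i)))
           = (2 * of_real pi * \<i>) ^ k * iter_circle_mean r k F (\<lambda>_. 0)"
proof (induction k arbitrary: F)
  case 0
  then show ?case by simp
next
  case (Suc k)
  have inner: "iter_circle_integral r k
        (\<lambda>z. F (z(Suc k := w)) * (\<Prod>i=1..Suc k. inverse ((z(Suc k := w)) i)))
      = inverse w * ((2 * of_real pi * \<i>) ^ k * iter_circle_mean r k F ((\<lambda>_. 0)(Suc k := w)))" for w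
  proof -
    have "iter_circle_integral r k
        (\<lambda>z. F (z(Suc k := w)) * (\<Prod>i=1..Suc k. inverse ((z(Suc k := w)) i)))
      = iter_circle_integral r k (\<lambda>z. inverse w * F (z(Suc k := w)) * (\<Prod>i=1..k. inverse (z i)))"
      by (simp add: prod_inverse_fun_upd_Suc mult_ac)
    also have "\<dots> = (2 * of_real pi * \<i>) ^ k * iter_circle_mean r k (\<lambda>z. inverse w * F (z(Suc k := w))) (\<lambda>_. 0)"
      by (rule Suc.IH)
    finally show ?thesis
      by (simp add: iter_circle_mean_mult iter_circle_mean_fun_upd)
  qed
  have "iter_circle_integral r (Suc k) (\<lambda>z. F z * (\<Prod>i=1..Suc k. inverse (z i)))
      = circle_integral r (\<lambda>w. inverse w *
          ((2 * of_real pi * \<i>) ^ k * iter_circle_mean r k F ((\<lambda>_. 0)(Suc k := w))))"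
    by (simp only: iter_circle_integral.simps inner)
  also have "\<dots> = (2 * of_real pi * \<i>) ^ Suc k * iter_circle_mean r (Suc k) F (\<lambda>_. 0)"
    using assms by (simp add: circle_integral_eq_integral_circlepath field_simps)
  finally show ?case .
qed

definition torus :: "real \<Rightarrow> nat set \<Rightarrow> (nat \<Rightarrow> complex) set" where
  "torus r I = {z. \<forall>i\<in>I. norm (z i) = r}"

lemma iter_circle_mean_cong:
  assumes "0 \<le> r" "\<And>z. z \<in> torus r I \<Longrightarrow> F z = G z" "b \<in> torus r (I - {1..k})"
  shows "iter_circle_mean r k F b = iter_circle_mean r k G b"
  using assms(3)
proof (induction k arbitrary: b)
  case 0
  then show ?case using assms(2) by simp
next
  case (Suc k)
  have "b(Suc k := circlepath 0 r t) \<in> torus r (I - {1..k})" for t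
    using Suc.prems assms(1) by (auto simp: torus_def)
  then show ?case
    unfolding iter_circle_mean.simps by (intro integral_cong Suc.IH)
qed

lemma continuous_on_coordinate [continuous_intros]: "continuous_on S (\<lambda>x. x i)"
  by (rule continuous_on_subset[OF continuous_on_product_coordinates]) simp

lemma continuous_on_fun_upd [continuous_intros]:
  assumes "continuous_on S f" "continuous_on S g"
  shows "continuous_on S (\<lambda>x. (f x)(k := g x))"
proof (rule continuous_on_coordinatewise_then_product)
  fix i
  show "continuous_on S (\<lambda>x. ((f x)(k := g x)) i)"
    using assms continuous_on_product_then_coordinatewise[OF assms(1)] by (cases "i = k") auto
qed

lemma continuous_on_circlepath [continuous_intros]:
  "continuous_on S f \<Longrightarrow> continuous_on S (\<lambda>x. circlepath c r (f x))"
  unfolding circlepath by (intro continuous_intros)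

lemma continuous_on_iter_circle_mean:
  assumes "0 \<le> r" and "continuous_on (torus r I) F"
  shows "continuous_on (torus r (I - {1..k})) (iter_circle_mean r k F)"
proof (induction k)
  case 0
  then show ?case using assms(2) by (simp add: fun_eq_iff)
next
  case (Suc k)
  have "continuous_on (torus r (I - {1..Suc k}) \<times> cbox 0 1)
          (\<lambda>(b, t). iter_circle_mean r k F (b(Suc k := circlepath 0 r t)))"
    unfolding split_beta
  proof (rule continuous_on_compose2[OF Suc.IH])
    show "continuous_on (torus r (I - {1..Suc k}) \<times> cbox 0 1)
            (\<lambda>x. (fst x)(Suc k := circlepath 0 r (snd x)))"
      by (intro continuous_intros)
  qed (use assms(1) in \<open>auto simp: torus_def\<close>)
  from integral_continuous_on_param[OF this] show ?case
    by (simp add: fun_eq_iff flip: interval_cbox)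
qed

lemma integral_iter_circle_mean_swap:
  assumes r: "0 \<le> r" and F: "continuous_on (torus r I) F" and j: "j \<notin> {1..k}"
    and b: "b \<in> torus r (I - {1..k} - {j})"
  shows "integral {0..1} (\<lambda>u. iter_circle_mean r k F (b(j := circlepath 0 r u)))
       = iter_circle_mean r k (\<lambda>z. integral {0..1} (\<lambda>u. F (z(j := circlepath 0 r u)))) b"
  using j b
proof (induction k arbitrary: b)
  case 0
  then show ?case by simp
next
  case (Suc k)
  then have "j \<noteq> Suc k" by auto
  define K where "K u t = iter_circle_mean r k F (b(Suc k := circlepath 0 r t, j := circlepath 0 r u))" for u t
  have "continuous_on (cbox (0, 0) (1, 1))
      (\<lambda>x. iter_circle_mean r k F (b(Suc k := circlepath 0 r (snd x), j := circlepath 0 r (fst x))))"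
  proof (rule continuous_on_compose2[OF continuous_on_iter_circle_mean[OF r F, of k]])
    show "continuous_on (cbox (0, 0) (1, 1))
            (\<lambda>x. b(Suc k := circlepath 0 r (snd x), j := circlepath 0 r (fst x)))"
      by (intro continuous_intros)
  qed (use r Suc.prems in \<open>auto simp: torus_def\<close>)
  then have K_cont: "continuous_on (cbox (0, 0) (1, 1)) (\<lambda>(u, t). K u t)"
    by (simp add: K_def split_beta)
  have "integral {0..1} (\<lambda>u. iter_circle_mean r (Suc k) F (b(j := circlepath 0 r u)))
      = integral (cbox 0 1) (\<lambda>u. integral (cbox 0 1) (\<lambda>t. K u t))"
    using \<open>j \<noteq> Suc k\<close> by (simp add: K_def fun_upd_twist flip: interval_cbox)
  also have "\<dots> = integral (cbox 0 1) (\<lambda>t. integral (cbox 0 1) (\<lambda>u. K u t))"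
    by (rule integral_swap_continuous[OF K_cont])
  also have "\<dots> = iter_circle_mean r (Suc k) (\<lambda>z. integral {0..1} (\<lambda>u. F (z(j := circlepath 0 r u)))) b"
    unfolding iter_circle_mean.simps K_def interval_cbox[symmetric]
  proof (rule integral_cong)
    fix t :: real
    have b': "b(Suc k := circlepath 0 r t) \<in> torus r (I - {1..k} - {j})"
      using Suc.prems r by (auto simp: torus_def)
    show "integral {0..1} (\<lambda>u. iter_circle_mean r k F (b(Suc k := circlepath 0 r t, j := circlepath 0 r u)))
        = iter_circle_mean r k (\<lambda>z. integral {0..1} (\<lambda>u. F (z(j := circlepath 0 r u)))) (b(Suc k := circlepath 0 r t))"
      by (rule Suc.IH[OF _ b']) (use Suc.prems(1) in auto)
  qed
  finally show ?case .
qed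

definition S_prod :: "complex \<Rightarrow> (nat \<times> nat) set \<Rightarrow> (nat \<Rightarrow> complex) \<Rightarrow> complex" where
  "S_prod q E z = (\<Prod>(\<alpha>, \<beta>)\<in>E. S_fac q z \<beta> \<alpha>)"

lemma S_fac_denominator_nonzero:
  fixes q za zb :: complex
  assumes "norm za = r" and "norm zb * (norm q + norm (1 - q) * r) < r"
  shows "za - q * zb - (1 - q) * za * zb \<noteq> 0"
proof
  assume "za - q * zb - (1 - q) * za * zb = 0"
  then have "za = zb * (q + (1 - q) * za)"
    by (simp add: algebra_simps)
  then have "r = norm zb * norm (q + (1 - q) * za)"
    using assms(1) by (metis norm_mult)
  also have "\<dots> \<le> norm zb * (norm q + norm (1 - q) * r)"
    using norm_triangle_ineq[of q "(1 - q) * za"] assms(1)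
    by (intro mult_left_mono) (simp_all add: norm_mult)
  finally show False
    using assms(2) by simp
qed

lemma continuous_on_S_prod:
  assumes "0 < r" and "norm q + norm (1 - q) * r < 1" and "E \<subseteq> I \<times> I"
  shows "continuous_on (torus r I) (S_prod q E)"
proof -
  have "continuous_on (torus r I) (\<lambda>z. S_fac q z \<beta> \<alpha>)" if "(\<alpha>, \<beta>) \<in> E" for \<alpha> \<beta>
    unfolding S_fac_def
  proof (intro continuous_intros ballI)
    fix z assume "z \<in> torus r I"
    then have "norm (z \<alpha>) = r" "norm (z \<beta>) = r"
      using that assms(3) by (auto simp: torus_def)
    then show "z \<alpha> - q * z \<beta> - (1 - q) * z \<alpha> * z \<beta> \<noteq> 0"
      using mult_strict_left_mono[OF assms(2,1)] by (intro S_fac_denominator_nonzero) simp_all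
  qed
  then show ?thesis
    unfolding S_prod_def split_beta by (intro continuous_on_prod) auto
qed

lemma holomorphic_on_S_prod_fun_upd:
  assumes "0 < r" and "E \<subseteq> (I - {j}) \<times> UNIV" and "z \<in> torus r I"
  shows "(\<lambda>w. S_prod q E (z(j := w))) holomorphic_on ball 0 (r / (norm q + norm (1 - q) * r))"
proof -
  have K: "norm q + norm (1 - q) * r > 0"
    using assms(1) by (cases "q = 1") (simp_all add: add_nonneg_pos)
  have "(\<lambda>w. S_fac q (z(j := w)) \<beta> \<alpha>) holomorphic_on ball 0 (r / (norm q + norm (1 - q) * r))"
    if "(\<alpha>, \<beta>) \<in> E" for \<alpha> \<beta>
  proof (cases "\<beta> = j")
    case True
    have "\<alpha> \<in> I" "\<alpha> \<noteq> j"
      using that assms(2) by auto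
    then have "norm (z \<alpha>) = r"
      using assms(3) by (simp add: torus_def)
    have S_fac_eq: "(\<lambda>w. S_fac q (z(j := w)) \<beta> \<alpha>) =
        (\<lambda>w. - ((w - q * z \<alpha> - (1 - q) * z \<alpha> * w) / (z \<alpha> - q * w - (1 - q) * z \<alpha> * w)))"
      using True \<open>\<alpha> \<noteq> j\<close> by (simp add: S_fac_def fun_eq_iff)
    show ?thesis
      unfolding S_fac_eq
    proof (intro holomorphic_intros)
      fix w :: complex assume "w \<in> ball 0 (r / (norm q + norm (1 - q) * r))"
      then have "norm w * (norm q + norm (1 - q) * r) < r"
        using K by (simp add: pos_less_divide_eq)
      then show "z \<alpha> - q * w - (1 - q) * z \<alpha> * w \<noteq> 0"
        by (rule S_fac_denominator_nonzero[OF \<open>norm (z \<alpha>) = r\<close>])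
    qed
  next
    case False
    moreover have "\<alpha> \<noteq> j"
      using that assms(2) by auto
    ultimately have "(\<lambda>w. S_fac q (z(j := w)) \<beta> \<alpha>) = (\<lambda>w. S_fac q z \<beta> \<alpha>)"
      by (simp add: S_fac_def)
    then show ?thesis
      by simp
  qed
  then show ?thesis
    unfolding S_prod_def split_beta by (intro holomorphic_on_prod) auto
qed

lemma S_prod_fun_upd_zero:
  assumes "0 < r" and "finite E" and "E \<subseteq> (I - {j}) \<times> UNIV" and "z \<in> torus r I"
  shows "S_prod q E (z(j := 0)) = q ^ card {p\<in>E. snd p = j} * S_prod q {p\<in>E. snd p \<noteq> j} z"
proof -
  let ?E1 = "{p\<in>E. snd p \<noteq> j}" and ?E2 = "{p\<in>E. snd p = j}"
  have "S_prod q E (z(j := 0)) = S_prod q ?E1 (z(j := 0)) * S_prod q ?E2 (z(j := 0))"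
    unfolding S_prod_def using assms(2) by (subst prod.union_disjoint[symmetric]) (auto intro: prod.cong)
  also have "S_prod q ?E1 (z(j := 0)) = S_prod q ?E1 z"
    unfolding S_prod_def using assms(3) by (intro prod.cong) (auto simp: S_fac_def)
  also have "S_prod q ?E2 (z(j := 0)) = (\<Prod>p\<in>?E2. q)"
    unfolding S_prod_def
  proof (intro prod.cong refl)
    fix p assume "p \<in> ?E2"
    then obtain \<alpha> where p: "p = (\<alpha>, j)" "\<alpha> \<in> I" "\<alpha> \<noteq> j"
      using assms(3) by (cases p) auto
    then have "z \<alpha> \<noteq> 0"
      using assms(1,4) by (auto simp: torus_def)
    then show "(case p of (\<alpha>, \<beta>) \<Rightarrow> S_fac q (z(j := 0)) \<beta> \<alpha>) = q"
      using p by (simp add: S_fac_def)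
  qed
  finally show ?thesis
    by (simp only: prod_constant mult.commute)
qed

lemma integral_S_prod_circlepath:
  assumes "0 < r" and "norm q + norm (1 - q) * r < 1"
    and "finite E" and "E \<subseteq> (I - {j}) \<times> UNIV" and "z \<in> torus r I"
  shows "integral {0..1} (\<lambda>t. S_prod q E (z(j := circlepath 0 r t)))
           = q ^ card {p\<in>E. snd p = j} * S_prod q {p\<in>E. snd p \<noteq> j} z"
proof -
  have "norm q + norm (1 - q) * r > 0"
    using assms(1) by (cases "q = 1") (simp_all add: add_nonneg_pos)
  then have "r < r / (norm q + norm (1 - q) * r)"
    using mult_strict_left_mono[OF assms(2,1)] by (simp add: pos_less_divide_eq)
  with holomorphic_on_S_prod_fun_upd[OF assms(1,4,5)] assms(1)
  have "integral {0..1} (\<lambda>t. S_prod q E (z(j := circlepath 0 r t))) = S_prod q E (z(j := 0))"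
    by (rule circle_mean_value)
  also have "\<dots> = q ^ card {p\<in>E. snd p = j} * S_prod q {p\<in>E. snd p \<noteq> j} z"
    by (rule S_prod_fun_upd_zero[OF assms(1,3,4,5)])
  finally show ?thesis .
qed

lemma iter_circle_mean_S_prod:
  assumes r: "0 < r" and qr: "norm q + norm (1 - q) * r < 1"
    and "E \<subseteq> {(\<alpha>, \<beta>). 1 \<le> \<alpha> \<and> \<alpha> < \<beta> \<and> \<beta> \<le> n}"
  shows "iter_circle_mean r n (S_prod q E) (\<lambda>_. 0) = q ^ card E"
  using assms(3)
proof (induction n arbitrary: E)
  case 0
  then have "E = {}" by auto
  then show ?case by (simp add: S_prod_def)
next
  case (Suc m)
  let ?E1 = "{p\<in>E. snd p \<noteq> Suc m}" and ?E2 = "{p\<in>E. snd p = Suc m}"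
  have E: "E \<subseteq> {1..Suc m} \<times> {1..Suc m}" "E \<subseteq> ({1..m} - {Suc m}) \<times> UNIV"
    using Suc.prems by auto
  then have "finite E"
    using finite_subset by blast
  have "iter_circle_mean r (Suc m) (S_prod q E) (\<lambda>_. 0)
      = integral {0..1} (\<lambda>t. iter_circle_mean r m (S_prod q E) ((\<lambda>_. 0)(Suc m := circlepath 0 r t)))"
    by simp
  also have "\<dots> = iter_circle_mean r m
      (\<lambda>z. integral {0..1} (\<lambda>t. S_prod q E (z(Suc m := circlepath 0 r t)))) (\<lambda>_. 0)"
    using r continuous_on_S_prod[OF r qr E(1)]
    by (intro integral_iter_circle_mean_swap) (auto simp: torus_def)
  also have "\<dots> = iter_circle_mean r m (\<lambda>z. q ^ card ?E2 * S_prod q ?E1 z) (\<lambda>_. 0)"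
    using r integral_S_prod_circlepath[OF r qr \<open>finite E\<close> E(2)]
    by (intro iter_circle_mean_cong[where I = "{1..m}"]) (auto simp: torus_def)
  also have "\<dots> = q ^ card ?E2 * q ^ card ?E1"
    using Suc.IH[of ?E1] Suc.prems by (force simp: iter_circle_mean_mult)
  also have "\<dots> = q ^ card E"
  proof -
    have "E = ?E1 \<union> ?E2" by auto
    then have "card E = card ?E1 + card ?E2"
      using \<open>finite E\<close> by (metis (no_types, lifting) card_Un_disjoint disjoint_iff finite_Un mem_Collect_eq)
    then show ?thesis by (simp add: power_add mult.commute)
  qed
  finally show ?case .
qed

theorem mainTheorem5:
  fixes n :: nat and q :: complex and r :: real and \<sigma> :: "nat \<Rightarrow> nat"
  assumes "n \<ge> 1"
    and "0 < norm q" and "norm q < 1"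
    and "0 < r" and "r < (1 - norm q) / norm (1 - q)"
    and "\<sigma> permutes {1..n}"
  shows "(1 / (2 * of_real pi * \<i>)) ^ n *
           iter_circle_integral r n (\<lambda>z. A_perm q n \<sigma> z * (\<Prod>i=1..n. inverse (z i)))
         = q ^ card (inversions n \<sigma>)"
proof -
  \<comment> \<open>Only \<open>r > 0\<close> and the bound \<open>qr\<close> enter the argument.\<close>
  have "norm (1 - q) > 0"
    using assms(3) by auto
  then have qr: "norm q + norm (1 - q) * r < 1"
    using assms(5) by (simp add: pos_less_divide_eq mult.commute)
  have "A_perm q n \<sigma> = S_prod q (inversions n \<sigma>)"
    by (simp add: fun_eq_iff A_perm_def S_prod_def)
  moreover have "inversions n \<sigma> \<subseteq> {(\<alpha>, \<beta>). 1 \<le> \<alpha> \<and> \<alpha> < \<beta> \<and> \<beta> \<le> n}"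
    by (auto simp: inversions_def)
  ultimately have "iter_circle_integral r n (\<lambda>z. A_perm q n \<sigma> z * (\<Prod>i=1..n. inverse (z i)))
      = (2 * of_real pi * \<i>) ^ n * q ^ card (inversions n \<sigma>)"
    using assms(4) iter_circle_integral_eq_mean iter_circle_mean_S_prod[OF assms(4) qr] by simp
  then show ?thesis
    by (simp add: power_divide flip: power_mult_distrib)
qed

end
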